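(* Let $P\subset\mathbb R^d$ be a rational $d$-polytope with irredundant presentation $P=\bigcap_{i=1}^m H^{\ge}_{\bm a_i,b_i}$, $(\bm a_i,b_i)\in\mathbb Z^{d+1}$ primitive, and let $\mathcal C_P\subset\mathbb R^{d+1}$ be the cone generated by $\{(\bm x,1):\bm x\in P\}$. For $\bm u,\bm v\in\mathbb R^d$ the following are equivalent: (1) $(\mathcal C_P+(\bm u,0))\cap\mathbb Z^{d+1}=(\mathcal C_P+(\bm v,0))\cap\mathbb Z^{d+1}$; (2) $\lceil(\bm a_i,\bm u)\rceil=\lceil(\bm a_i,\bm v)\rceil$ for all $i=1,\dots,m$ (i.e. $\bm u$ and $\bm v$ lie in the same upper region of $\Lambda_P$).
   Context: $H^{\ge}_{\bm a,b}=\{\bm x\in\mathbb R^d:(\bm a,\bm x)\ge b\}$. For $\bm c\in\mathbb Z^m$, the upper region is $U_{\bm c}=\{\bm x\in\mathbb R^d: c_i-1<(\bm a_i,\bm x)\le c_i \text{ for all } i\}$, and $\Lambda_P$ is the set of upper regions; they partition $\mathbb R^d$. *)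

theory Defs
  imports "HOL-Analysis.Analysis"
begin

definition rvec :: "int^'n \<Rightarrow> real^'n" where
  "rvec a = (\<chi> j. real_of_int (a $ j))"

definition polyh :: "nat \<Rightarrow> (nat \<Rightarrow> int^'n) \<Rightarrow> (nat \<Rightarrow> int) \<Rightarrow> (real^'n) set" where
  "polyh m a b = {x. \<forall>i<m. rvec (a i) \<bullet> x \<ge> real_of_int (b i)}"

definition irredundant :: "nat \<Rightarrow> (nat \<Rightarrow> int^'n) \<Rightarrow> (nat \<Rightarrow> int) \<Rightarrow> bool" where
  "irredundant m a b \<longleftrightarrow>
     (\<forall>k<m. {x. \<forall>i<m. i \<noteq> k \<longrightarrow> rvec (a i) \<bullet> x \<ge> real_of_int (b i)} \<noteq> polyh m a b)"

definition primitive :: "int^'n \<Rightarrow> int \<Rightarrow> bool" where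
  "primitive a b \<longleftrightarrow> (\<forall>k::int. (\<forall>j. k dvd a $ j) \<and> k dvd b \<longrightarrow> is_unit k)"

definition coneP :: "(real^'n) set \<Rightarrow> ((real^'n) \<times> real) set" where
  "coneP P = convex_cone hull ((\<lambda>x. (x, 1)) ` P)"

definition lattice_pts :: "((real^'n) \<times> real) set" where
  "lattice_pts = {p. (\<forall>j. fst p $ j \<in> \<int>) \<and> snd p \<in> \<int>}"

end

theory Submission
  imports Defs
begin

text \<open>
  As P is bounded, its homogenisation is the cone of all (y, t) with t \<ge> 0 and
  (a_i, y) \<ge> b_i t. An integer point (z, t) therefore lies in C_P + (w, 0) iff
  t \<ge> 0 and each integer slack (a_i, z) - b_i t is at least (a_i, w), i.e. at least
  \<lceil>(a_i, w)\<rceil>; so the lattice points only depend on these ceilings.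
  Conversely, for every facet k there is a lattice point of C_P + (w, 0) whose k-th slack
  is exactly \<lceil>(a_k, w)\<rceil>: primitivity gives, by Bezout, an integer point with k-th
  slack 1; full dimension and irredundancy give an integer point of the cone on the
  hyperplane of facet k strictly inside all other facets, and adding a large multiple of it
  repairs all other inequalities. If this point also lies in C_P + (w', 0), then
  \<lceil>(a_k, w')\<rceil> \<le> \<lceil>(a_k, w)\<rceil>.
\<close>

lemma exists_sum_mult_eq_Gcd_fin:
  fixes f :: "'a \<Rightarrow> int"
  assumes "finite J"
  shows "\<exists>w. (\<Sum>j\<in>J. f j * w j) = Gcd_fin (f ` J)"
  using assms
proof (induction J rule: finite_induct)
  case empty
  show ?case by simp
next
  case (insert x J)
  obtain w where w: "(\<Sum>j\<in>J. f j * w j) = Gcd_fin (f ` J)"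
    using insert.IH by blast
  obtain p q where pq: "p * f x + q * Gcd_fin (f ` J) = gcd (f x) (Gcd_fin (f ` J))"
    using bezout_int by blast
  define w' where "w' j = (if j = x then p else q * w j)" for j
  have "(\<Sum>j\<in>J. f j * w' j) = q * (\<Sum>j\<in>J. f j * w j)"
    unfolding sum_distrib_left using insert.hyps(2) by (intro sum.cong) (auto simp: w'_def)
  then have "(\<Sum>j\<in>insert x J. f j * w' j) = f x * p + q * (\<Sum>j\<in>J. f j * w j)"
    using insert.hyps by (simp add: w'_def)
  also have "\<dots> = Gcd_fin (f ` insert x J)"
    using pq w by (simp add: mult.commute)
  finally show ?case by blast
qed

lemma primitive_bezout:
  fixes a :: "int^'n" and b :: int
  assumes "primitive a b"
  shows "\<exists>w s. (\<forall>j. w $ j \<in> \<int>) \<and> s \<in> \<int> \<and> rvec a \<bullet> w - of_int b * s = 1"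
proof -
  define G where "G = Gcd_fin (range (($) a))"
  have "\<exists>w. (\<Sum>j\<in>UNIV. a $ j * w j) = G"
    using exists_sum_mult_eq_Gcd_fin[of UNIV "($) a"] unfolding G_def by simp
  then obtain w where w: "(\<Sum>j\<in>UNIV. a $ j * w j) = G" by blast
  have "gcd G b dvd a $ j" for j
    unfolding G_def by (meson Gcd_fin_dvd dvd_trans gcd_dvd1 rangeI)
  then have "is_unit (gcd G b)"
    using assms gcd_dvd2[of G b] unfolding primitive_def by blast
  then have "gcd G b = 1" by simp
  then obtain p q where pq: "p * G + q * b = 1"
    using bezout_int[of G b] by auto
  define w' :: "real^'n" where "w' = (\<chi> j. of_int (p * w j))"
  have "rvec a \<bullet> w' = of_int (p * G)"
    unfolding rvec_def inner_vec_def inner_real_def w'_def w[symmetric]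
    by (simp add: sum_distrib_left mult.left_commute)
  then have "rvec a \<bullet> w' - of_int b * of_int (- q) = 1"
    using pq by (simp add: algebra_simps flip: of_int_mult of_int_add)
  moreover have "\<forall>j. w' $ j \<in> \<int>" by (simp add: w'_def)
  ultimately show ?thesis by (intro exI[of _ w'] exI[of _ "of_int (- q)"]) simp
qed

lemma exists_integral_strict_solution:
  fixes x :: "real^'n" and \<alpha> :: "'i \<Rightarrow> real^'n" and \<beta> :: "'i \<Rightarrow> real"
  assumes fin: "finite I" and strict: "\<And>i. i \<in> I \<Longrightarrow> \<beta> i < \<alpha> i \<bullet> x"
  shows "\<exists>z q. (\<forall>j. z $ j \<in> \<int>) \<and> q \<in> \<int> \<and> 1 \<le> q \<and> (\<forall>i\<in>I. \<beta> i * q < \<alpha> i \<bullet> z)"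
proof -
  define r where "r i = (\<Sum>j\<in>UNIV. \<bar>\<alpha> i $ j\<bar>) / (\<alpha> i \<bullet> x - \<beta> i)" for i
  define n :: nat where "n = nat \<lceil>\<Sum>i\<in>I. r i\<rceil> + 1"
  have r_less: "r i < real n" if "i \<in> I" for i
  proof -
    have "r i \<le> (\<Sum>i\<in>I. r i)"
      using fin that strict by (intro member_le_sum) (auto simp: r_def less_imp_le)
    also have "\<dots> < real n"
      using real_nat_ceiling_ge[of "\<Sum>i\<in>I. r i"] unfolding n_def by simp
    finally show ?thesis .
  qed
  (* rounding n x moves \<alpha> i \<bullet> (n x) by at most \<Sum>j |\<alpha> i $ j|, which is < n (\<alpha> i \<bullet> x - \<beta> i) *)
  define z :: "real^'n" where "z = (\<chi> j. of_int \<lfloor>real n * x $ j\<rfloor>)"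
  have round: "\<bar>z $ j - real n * x $ j\<bar> \<le> 1" for j
    using of_int_floor_le[of "real n * x $ j"] real_of_int_floor_add_one_gt[of "real n * x $ j"]
    unfolding z_def vec_lambda_beta abs_le_iff by linarith
  have "\<beta> i * real n < \<alpha> i \<bullet> z" if i: "i \<in> I" for i
  proof -
    have "\<alpha> i \<bullet> z - \<beta> i * real n
        = real n * (\<alpha> i \<bullet> x - \<beta> i) + (\<Sum>j\<in>UNIV. \<alpha> i $ j * (z $ j - real n * x $ j))"
      unfolding inner_vec_def inner_real_def
      by (simp add: algebra_simps sum_subtractf sum_distrib_left)
    moreover have "\<bar>\<Sum>j\<in>UNIV. \<alpha> i $ j * (z $ j - real n * x $ j)\<bar> \<le> (\<Sum>j\<in>UNIV. \<bar>\<alpha> i $ j\<bar>)"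
      using round by (intro order_trans[OF sum_abs] sum_mono) (simp add: abs_mult mult_left_le)
    moreover have "(\<Sum>j\<in>UNIV. \<bar>\<alpha> i $ j\<bar>) < real n * (\<alpha> i \<bullet> x - \<beta> i)"
      using r_less[OF i] strict[OF i] by (simp add: r_def pos_divide_less_eq mult.commute)
    ultimately show ?thesis by (simp add: abs_le_iff)
  qed
  moreover have "\<forall>j. z $ j \<in> \<int>" unfolding z_def by simp
  ultimately show ?thesis
    by (intro exI[of _ z] exI[of _ "real n"]) (auto simp: n_def)
qed

lemma bounded_polyhedron_recession_eq_0:
  fixes A :: "'i \<Rightarrow> real^'n"
  assumes P: "P = {x. \<forall>i\<in>I. c i \<le> A i \<bullet> x}" and "bounded P" and x0: "x0 \<in> P"
    and y: "\<forall>i\<in>I. 0 \<le> A i \<bullet> y"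
  shows "y = 0"
proof (rule ccontr)
  assume "y \<noteq> 0"
  obtain B where B: "\<And>x. x \<in> P \<Longrightarrow> norm x \<le> B"
    using \<open>bounded P\<close> unfolding bounded_iff by blast
  define s where "s = (B + norm x0 + 1) / norm y"
  have "0 \<le> B + norm x0 + 1" using B[OF x0] norm_ge_zero[of x0] by linarith
  then have s: "0 \<le> s" "norm (s *\<^sub>R y) = B + norm x0 + 1"
    using \<open>y \<noteq> 0\<close> by (simp_all add: s_def)
  have "x0 + s *\<^sub>R y \<in> P"
    using x0 y s(1) unfolding P by (auto simp: inner_add_right intro: add_increasing2)
  then have "norm (x0 + s *\<^sub>R y) \<le> B" by (rule B)
  moreover have "norm (s *\<^sub>R y) \<le> norm (x0 + s *\<^sub>R y) + norm x0"
    using norm_triangle_ineq4[of "x0 + s *\<^sub>R y" x0] by simp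
  ultimately show False using s(2) by linarith
qed

lemma coneP_polyhedron:
  fixes A :: "'i \<Rightarrow> real^'n"
  assumes P: "P = {x. \<forall>i\<in>I. c i \<le> A i \<bullet> x}" and "bounded P" and "P \<noteq> {}"
  shows "coneP P = {(y, t). 0 \<le> t \<and> (\<forall>i\<in>I. c i * t \<le> A i \<bullet> y)}" (is "_ = ?K")
  unfolding coneP_def
proof
  have "convex_cone ?K"
    unfolding convex_cone_iff
    by (auto simp: zero_prod_def inner_add_right inner_scaleR_right distrib_left
        mult.left_commute intro: add_mono mult_left_mono)
  moreover have "(\<lambda>x. (x, 1)) ` P \<subseteq> ?K" by (auto simp: P)
  ultimately show "convex_cone hull ((\<lambda>x. (x, 1)) ` P) \<subseteq> ?K"
    by (rule hull_minimal[rotated])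
next
  show "?K \<subseteq> convex_cone hull ((\<lambda>x. (x, 1)) ` P)"
  proof clarify
    fix y t assume t: "0 \<le> t" and yt: "\<forall>i\<in>I. c i * t \<le> A i \<bullet> y"
    show "(y, t) \<in> convex_cone hull ((\<lambda>x. (x, 1)) ` P)"
    proof (cases "t = 0")
      case True
      obtain x0 where "x0 \<in> P" using \<open>P \<noteq> {}\<close> by blast
      then have "y = 0"
        using yt True by (intro bounded_polyhedron_recession_eq_0[OF P \<open>bounded P\<close>]) auto
      then show ?thesis
        using True convex_cone_hull_contains_0[of "(\<lambda>x. (x, 1)) ` P"]
        by (simp add: zero_prod_def)
    next
      case False
      then have "(1 / t) *\<^sub>R y \<in> P"
        using t yt by (auto simp: P field_simps)
      then have "t *\<^sub>R ((1 / t) *\<^sub>R y, 1::real) \<in> convex_cone hull ((\<lambda>x. (x, 1)) ` P)"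
        using t by (intro convex_cone_hull_mul hull_inc) auto
      then show ?thesis using False by simp
    qed
  qed
qed

definition slack :: "('i \<Rightarrow> real^'n) \<Rightarrow> ('i \<Rightarrow> real) \<Rightarrow> 'i \<Rightarrow> real^'n \<Rightarrow> real \<Rightarrow> real"
  where "slack A c i z t = A i \<bullet> z - c i * t"

lemma slack_lincomb:
  "slack A c i (\<alpha> *\<^sub>R z + \<beta> *\<^sub>R z') (\<alpha> * t + \<beta> * t') = \<alpha> * slack A c i z t + \<beta> * slack A c i z' t'"
  unfolding slack_def by (simp add: inner_add_right algebra_simps)

lemma slack_Ints:
  assumes "\<forall>i j. A i $ j \<in> \<int>" "\<forall>i. c i \<in> \<int>" "\<forall>j. z $ j \<in> \<int>" "t \<in> \<int>"
  shows "slack A c i z t \<in> \<int>"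
  unfolding slack_def inner_vec_def inner_real_def using assms
  by (intro Ints_diff Ints_mult Ints_sum) auto

lemma Ints_ge_1: "(x::real) \<in> \<int> \<Longrightarrow> 0 < x \<Longrightarrow> 1 \<le> x"
  using Ints_nonzero_abs_ge1[of x] by simp

lemma polyhedron_interior_strict:
  fixes A :: "'i \<Rightarrow> real^'n"
  assumes P: "P = {x. \<forall>i\<in>I. c i \<le> A i \<bullet> x}" and x: "x \<in> interior P" and i: "i \<in> I"
    and nontrivial: "A i \<noteq> 0 \<or> c i \<noteq> 0"
  shows "c i < A i \<bullet> x"
proof -
  obtain e where e: "0 < e" "ball x e \<subseteq> P" using x mem_interior by blast
  show ?thesis
  proof (cases "A i = 0")
    case True
    have "c i \<le> A i \<bullet> x" using interior_subset[of P] x i unfolding P by blast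
    then show ?thesis using True nontrivial by simp
  next
    case False
    define x' where "x' = x - (e / 2 / norm (A i)) *\<^sub>R A i"
    have "dist x x' = e / 2" using False e unfolding x'_def dist_norm by simp
    then have "x' \<in> P" using e by auto
    then have "c i \<le> A i \<bullet> x'" using i unfolding P by blast
    also have "A i \<bullet> x' = A i \<bullet> x - e / 2 * norm (A i)"
      using False unfolding x'_def
      by (simp add: inner_diff_right power2_norm_eq_inner[symmetric] power2_eq_square)
    finally have "c i \<le> A i \<bullet> x - e / 2 * norm (A i)" .
    moreover have "0 < e / 2 * norm (A i)" using False e by simp
    ultimately show ?thesis by linarith
  qed
qed

lemma exists_point_beyond_facet:
  fixes A :: "'i \<Rightarrow> real^'n"
  assumes x1: "\<forall>i\<in>I. c i < A i \<bullet> x1" and k: "k \<in> I"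
    and y: "\<forall>i\<in>I - {k}. c i \<le> A i \<bullet> y" "A k \<bullet> y < c k"
  shows "\<exists>x. A k \<bullet> x < c k \<and> (\<forall>i\<in>I - {k}. c i < A i \<bullet> x)"
proof -
  define \<epsilon> where "\<epsilon> = (c k - A k \<bullet> y) / (A k \<bullet> x1 - A k \<bullet> y) / 2"
  have \<epsilon>: "0 < \<epsilon>" "\<epsilon> < 1" "\<epsilon> * (A k \<bullet> x1 - A k \<bullet> y) = (c k - A k \<bullet> y) / 2"
    using x1 k y(2) unfolding \<epsilon>_def by (auto simp: field_simps)
  define x where "x = y + \<epsilon> *\<^sub>R (x1 - y)"
  have x: "A i \<bullet> x = (1 - \<epsilon>) * (A i \<bullet> y) + \<epsilon> * (A i \<bullet> x1)" for i
    unfolding x_def by (simp add: inner_add_right inner_diff_right algebra_simps)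
  have "A k \<bullet> x < c k"
    using \<epsilon>(3) y(2) unfolding x by (simp add: algebra_simps)
  moreover have "c i < A i \<bullet> x" if "i \<in> I - {k}" for i
  proof -
    have "(1 - \<epsilon>) * c i \<le> (1 - \<epsilon>) * (A i \<bullet> y)" using y(1) that \<epsilon> by (intro mult_left_mono) auto
    moreover have "\<epsilon> * c i < \<epsilon> * (A i \<bullet> x1)" using x1 that \<epsilon> by (intro mult_strict_left_mono) auto
    ultimately show ?thesis unfolding x by (simp add: algebra_simps)
  qed
  ultimately show ?thesis by blast
qed

lemma exists_integral_facet_direction:
  fixes A :: "'i \<Rightarrow> real^'n"
  assumes fin: "finite I" and k: "k \<in> I"
    and intA: "\<forall>i j. A i $ j \<in> \<int>" and intc: "\<forall>i. c i \<in> \<int>"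
    and x1: "\<forall>i\<in>I. c i < A i \<bullet> x1"
    and x2: "A k \<bullet> x2 < c k" "\<forall>i\<in>I - {k}. c i < A i \<bullet> x2"
  shows "\<exists>z t. (\<forall>j. z $ j \<in> \<int>) \<and> t \<in> \<int> \<and> 1 \<le> t \<and> slack A c k z t = 0
              \<and> (\<forall>i\<in>I - {k}. 1 \<le> slack A c i z t)"
proof -
  obtain z1 q1 where z1: "\<forall>j. z1 $ j \<in> \<int>" "q1 \<in> \<int>" "1 \<le> q1" "\<forall>i\<in>I. 0 < slack A c i z1 q1"
    using exists_integral_strict_solution[OF fin, where x=x1 and \<alpha>=A and \<beta>=c] x1 by (auto simp: slack_def)
  define \<sigma> where "\<sigma> i = (if i = k then -1 else 1 :: real)" for i
  obtain z2 q2 where z2: "\<forall>j. z2 $ j \<in> \<int>" "q2 \<in> \<int>" "1 \<le> q2"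
      "\<forall>i\<in>I. \<sigma> i * c i * q2 < (\<sigma> i *\<^sub>R A i) \<bullet> z2"
    using exists_integral_strict_solution[OF fin,
        where x=x2 and \<alpha>="\<lambda>i. \<sigma> i *\<^sub>R A i" and \<beta>="\<lambda>i. \<sigma> i * c i"] x2
    by (force simp: \<sigma>_def)
  have z2_k: "slack A c k z2 q2 < 0"
    using bspec[OF z2(4) k] by (simp add: slack_def \<sigma>_def)
  have z2_other: "0 < slack A c i z2 q2" if "i \<in> I - {k}" for i
    using bspec[OF z2(4), of i] that by (simp add: slack_def \<sigma>_def)
  (* positive integer weights r2, r1 make the k-th slacks cancel *)
  define r1 where "r1 = slack A c k z1 q1"
  define r2 where "r2 = - slack A c k z2 q2"
  have r: "0 < r1" "0 < r2" "r1 \<in> \<int>" "r2 \<in> \<int>"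
    using z1 z2 z2_k k slack_Ints[OF intA intc] unfolding r1_def r2_def by auto
  define z where "z = r2 *\<^sub>R z1 + r1 *\<^sub>R z2"
  define t where "t = r2 * q1 + r1 * q2"
  have zt: "\<forall>j. z $ j \<in> \<int>" "t \<in> \<int>"
    using z1 z2 r unfolding z_def t_def by auto
  have slack_zt: "slack A c i z t = r2 * slack A c i z1 q1 + r1 * slack A c i z2 q2" for i
    unfolding z_def t_def by (rule slack_lincomb)
  have "slack A c k z t = 0"
    unfolding slack_zt r1_def r2_def by simp
  moreover have "1 \<le> slack A c i z t" if "i \<in> I - {k}" for i
    using that r z1(4) z2_other slack_Ints[OF intA intc zt]
    by (intro Ints_ge_1) (auto simp: slack_zt intro!: add_pos_pos)
  moreover have "1 \<le> t"
    using r z1 z2 zt by (intro Ints_ge_1) (auto simp: t_def intro!: add_pos_pos)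
  ultimately show ?thesis using zt by blast
qed

lemma exists_lattice_point_on_facet:
  fixes A :: "'i \<Rightarrow> real^'n" and C :: "'i \<Rightarrow> int"
  assumes fin: "finite I" and k: "k \<in> I"
    and intA: "\<forall>i j. A i $ j \<in> \<int>" and intc: "\<forall>i. c i \<in> \<int>"
    and dir: "\<forall>j. zD $ j \<in> \<int>" "tD \<in> \<int>" "1 \<le> tD" "slack A c k zD tD = 0"
      "\<forall>i\<in>I - {k}. 1 \<le> slack A c i zD tD"
    and unit: "\<forall>j. w $ j \<in> \<int>" "s \<in> \<int>" "slack A c k w s = 1"
  shows "\<exists>z t. (\<forall>j. z $ j \<in> \<int>) \<and> t \<in> \<int> \<and> 0 \<le> t \<and> slack A c k z t = C k
              \<and> (\<forall>i\<in>I. C i \<le> slack A c i z t)"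
proof -
  define z0 where "z0 = of_int (C k) *\<^sub>R w"
  define t0 where "t0 = of_int (C k) * s"
  have zt0: "\<forall>j. z0 $ j \<in> \<int>" "t0 \<in> \<int>" "slack A c k z0 t0 = C k"
    using unit slack_lincomb[of A c k "of_int (C k)" w 0 0 s 0] by (auto simp: z0_def t0_def)
  (* N steps along the facet direction repair every other inequality *)
  define N where "N = (\<Sum>i\<in>I. \<bar>of_int (C i) - slack A c i z0 t0\<bar>) + \<bar>t0\<bar>"
  have N: "N \<in> \<int>" "\<bar>t0\<bar> \<le> N"
    using zt0 slack_Ints[OF intA intc] unfolding N_def by (auto intro!: Ints_sum sum_nonneg)
  have N_ge: "\<bar>of_int (C i) - slack A c i z0 t0\<bar> \<le> N" if "i \<in> I" for i
    unfolding N_def using fin that by (intro add_increasing2 member_le_sum) auto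
  define z where "z = z0 + N *\<^sub>R zD"
  define t where "t = t0 + N * tD"
  have slack_zt: "slack A c i z t = slack A c i z0 t0 + N * slack A c i zD tD" for i
    using slack_lincomb[of A c i 1 z0 N zD t0 tD] unfolding z_def t_def by simp
  have "\<forall>j. z $ j \<in> \<int>" "t \<in> \<int>"
    using zt0 N dir unfolding z_def t_def by auto
  moreover have "0 \<le> t"
    using N dir mult_left_mono[of 1 tD N] unfolding t_def by linarith
  moreover have "slack A c k z t = C k"
    using zt0 dir by (simp add: slack_zt)
  moreover have "C i \<le> slack A c i z t" if "i \<in> I" for i
  proof (cases "i = k")
    case False
    then have "N \<le> N * slack A c i zD tD"
      using that N dir mult_left_mono[of 1 _ N] by auto
    then show ?thesis using N_ge[OF that] by (simp add: slack_zt abs_le_iff)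
  qed (use zt0 dir in \<open>simp add: slack_zt\<close>)
  ultimately show ?thesis by blast
qed

definition shifted_cone_lattice ::
    "'i set \<Rightarrow> ('i \<Rightarrow> real^'n) \<Rightarrow> ('i \<Rightarrow> real) \<Rightarrow> real^'n \<Rightarrow> ((real^'n) \<times> real) set"
  where "shifted_cone_lattice I A c w =
    {(z, t). (\<forall>j. z $ j \<in> \<int>) \<and> t \<in> \<int> \<and> 0 \<le> t \<and> (\<forall>i\<in>I. of_int \<lceil>A i \<bullet> w\<rceil> \<le> slack A c i z t)}"

lemma le_Ints_iff_ceiling_le: "(r::real) \<in> \<int> \<Longrightarrow> x \<le> r \<longleftrightarrow> of_int \<lceil>x\<rceil> \<le> r"
  by (elim Ints_cases) (simp add: ceiling_le_iff)

lemma lattice_points_shifted_coneP: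
  fixes A :: "'i \<Rightarrow> real^'n"
  assumes P: "P = {x. \<forall>i\<in>I. c i \<le> A i \<bullet> x}" and "bounded P" and "P \<noteq> {}"
    and intA: "\<forall>i j. A i $ j \<in> \<int>" and intc: "\<forall>i. c i \<in> \<int>"
  shows "(\<lambda>p. p + (w, 0)) ` coneP P \<inter> lattice_pts = shifted_cone_lattice I A c w"
proof (rule set_eqI)
  fix p :: "(real^'n) \<times> real"
  obtain z t where p: "p = (z, t)" by (cases p)
  have shift: "p \<in> (\<lambda>p. p + (w, 0)) ` coneP P \<longleftrightarrow> (z - w, t) \<in> coneP P"
    unfolding p by (force simp: image_iff)
  have lattice: "p \<in> lattice_pts \<longleftrightarrow> (\<forall>j. z $ j \<in> \<int>) \<and> t \<in> \<int>"
    by (simp add: p lattice_pts_def)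
  have "c i * t \<le> A i \<bullet> (z - w) \<longleftrightarrow> of_int \<lceil>A i \<bullet> w\<rceil> \<le> slack A c i z t"
    if "\<forall>j. z $ j \<in> \<int>" "t \<in> \<int>" for i
    using that slack_Ints[OF intA intc] le_Ints_iff_ceiling_le[of "slack A c i z t" "A i \<bullet> w"]
    by (auto simp: slack_def inner_diff_right)
  then show "p \<in> (\<lambda>p. p + (w, 0)) ` coneP P \<inter> lattice_pts \<longleftrightarrow> p \<in> shifted_cone_lattice I A c w"
    unfolding Int_iff shift lattice
    by (auto simp: p shifted_cone_lattice_def coneP_polyhedron[OF assms(1-3)])
qed

lemma ceiling_le_if_shifted_cone_lattice_subset:
  fixes A :: "'i \<Rightarrow> real^'n"
  assumes fin: "finite I" and k: "k \<in> I"
    and intA: "\<forall>i j. A i $ j \<in> \<int>" and intc: "\<forall>i. c i \<in> \<int>"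
    and x1: "\<forall>i\<in>I. c i < A i \<bullet> x1"
    and y: "\<forall>i\<in>I - {k}. c i \<le> A i \<bullet> y" "A k \<bullet> y < c k"
    and unit: "\<exists>w s. (\<forall>j. w $ j \<in> \<int>) \<and> s \<in> \<int> \<and> slack A c k w s = 1"
    and sub: "shifted_cone_lattice I A c w \<subseteq> shifted_cone_lattice I A c w'"
  shows "\<lceil>A k \<bullet> w'\<rceil> \<le> \<lceil>A k \<bullet> w\<rceil>"
proof -
  obtain x2 where "A k \<bullet> x2 < c k" "\<forall>i\<in>I - {k}. c i < A i \<bullet> x2"
    using exists_point_beyond_facet[OF x1 k y] by blast
  then obtain zD tD where dir: "\<forall>j. zD $ j \<in> \<int>" "tD \<in> \<int>" "1 \<le> tD"
      "slack A c k zD tD = 0" "\<forall>i\<in>I - {k}. 1 \<le> slack A c i zD tD"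
    using exists_integral_facet_direction[OF fin k intA intc x1] by blast
  obtain w0 s0 where w0: "\<forall>j. w0 $ j \<in> \<int>" "s0 \<in> \<int>" "slack A c k w0 s0 = 1"
    using unit by blast
  obtain z t where zt: "\<forall>j. z $ j \<in> \<int>" "t \<in> \<int>" "0 \<le> t" "slack A c k z t = \<lceil>A k \<bullet> w\<rceil>"
      "\<forall>i\<in>I. \<lceil>A i \<bullet> w\<rceil> \<le> slack A c i z t"
    using exists_lattice_point_on_facet[OF fin k intA intc dir w0, of "\<lambda>i. \<lceil>A i \<bullet> w\<rceil>"] by blast
  then have "(z, t) \<in> shifted_cone_lattice I A c w'"
    using sub by (auto simp: shifted_cone_lattice_def)
  then have "\<lceil>A k \<bullet> w'\<rceil> \<le> slack A c k z t"
    using k by (simp add: shifted_cone_lattice_def)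
  then show ?thesis using zt(4) by simp
qed

lemma shifted_cone_lattice_eq_iff:
  fixes A :: "'i \<Rightarrow> real^'n"
  assumes fin: "finite I"
    and intA: "\<forall>i j. A i $ j \<in> \<int>" and intc: "\<forall>i. c i \<in> \<int>"
    and x1: "\<forall>i\<in>I. c i < A i \<bullet> x1"
    and facet: "\<And>k. k \<in> I \<Longrightarrow> \<exists>y. (\<forall>i\<in>I - {k}. c i \<le> A i \<bullet> y) \<and> A k \<bullet> y < c k"
    and unit: "\<And>k. k \<in> I \<Longrightarrow> \<exists>w s. (\<forall>j. w $ j \<in> \<int>) \<and> s \<in> \<int> \<and> slack A c k w s = 1"
  shows "shifted_cone_lattice I A c u = shifted_cone_lattice I A c v
           \<longleftrightarrow> (\<forall>i\<in>I. \<lceil>A i \<bullet> u\<rceil> = \<lceil>A i \<bullet> v\<rceil>)"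
proof
  have mono: "\<lceil>A k \<bullet> w'\<rceil> \<le> \<lceil>A k \<bullet> w\<rceil>"
    if "shifted_cone_lattice I A c w \<subseteq> shifted_cone_lattice I A c w'" and k: "k \<in> I" for k w w'
    using facet[OF k] ceiling_le_if_shifted_cone_lattice_subset[OF fin k intA intc x1 _ _ unit[OF k] that(1)]
    by blast
  assume "shifted_cone_lattice I A c u = shifted_cone_lattice I A c v"
  then show "\<forall>i\<in>I. \<lceil>A i \<bullet> u\<rceil> = \<lceil>A i \<bullet> v\<rceil>"
    using mono by (metis order.antisym order.refl)
qed (simp add: shifted_cone_lattice_def)

lemma exists_strict_point_full_dim_polyhedron:
  fixes A :: "'i \<Rightarrow> real^'n"
  assumes P: "P = {x. \<forall>i\<in>I. c i \<le> A i \<bullet> x}" and full: "aff_dim P = int CARD('n)"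
    and nontrivial: "\<forall>i\<in>I. A i \<noteq> 0 \<or> c i \<noteq> 0"
  shows "\<exists>x. \<forall>i\<in>I. c i < A i \<bullet> x"
proof -
  have "P = (\<Inter>i\<in>I. {x. c i \<le> A i \<bullet> x})" unfolding P by auto
  then have "convex P" by (simp add: convex_INT convex_halfspace_ge)
  moreover have "P \<noteq> {}" using full by auto
  ultimately have "rel_interior P \<noteq> {}"
    using rel_interior_eq_empty by blast
  then have "interior P \<noteq> {}"
    using full interior_rel_interior_gen[of P] by simp
  then obtain x where "x \<in> interior P" by blast
  then show ?thesis using polyhedron_interior_strict[OF P] nontrivial by blast
qed

lemma irredundant_facet_witness:
  assumes "irredundant m a b" and "k < m"
  shows "\<exists>y. (\<forall>i<m. i \<noteq> k \<longrightarrow> real_of_int (b i) \<le> rvec (a i) \<bullet> y) \<and> rvec (a k) \<bullet> y < b k"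
proof -
  let ?Q = "{x. \<forall>i<m. i \<noteq> k \<longrightarrow> real_of_int (b i) \<le> rvec (a i) \<bullet> x}"
  have "polyh m a b \<subset> ?Q"
    using assms unfolding irredundant_def polyh_def by auto
  then obtain y where y: "y \<in> ?Q" "y \<notin> polyh m a b" by blast
  then have "\<not> real_of_int (b k) \<le> rvec (a k) \<bullet> y"
    unfolding polyh_def by auto
  then show ?thesis using y(1) by auto
qed

theorem mainTheorem3:
  fixes m :: nat and a :: "nat \<Rightarrow> int^'n" and b :: "nat \<Rightarrow> int"
    and u v :: "real^'n"
  assumes bounded: "bounded (polyh m a b)"
    and full_dim: "aff_dim (polyh m a b) = int CARD('n)"
    and irred: "irredundant m a b"
    and prim: "\<forall>i<m. primitive (a i) (b i)"
  shows "((\<lambda>p. p + (u, 0)) ` coneP (polyh m a b) \<inter> lattice_pts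
            = (\<lambda>p. p + (v, 0)) ` coneP (polyh m a b) \<inter> lattice_pts)
         \<longleftrightarrow> (\<forall>i<m. \<lceil>rvec (a i) \<bullet> u\<rceil> = \<lceil>rvec (a i) \<bullet> v\<rceil>)"
proof -
  define A where "A i = rvec (a i)" for i
  define c where "c i = real_of_int (b i)" for i
  have P: "polyh m a b = {x. \<forall>i\<in>{..<m}. c i \<le> A i \<bullet> x}"
    unfolding polyh_def A_def c_def by auto
  have intA: "\<forall>i j. A i $ j \<in> \<int>" and intc: "\<forall>i. c i \<in> \<int>"
    by (simp_all add: A_def c_def rvec_def)
  have unit: "\<exists>w s. (\<forall>j. w $ j \<in> \<int>) \<and> s \<in> \<int> \<and> slack A c i w s = 1" if "i \<in> {..<m}" for i
    using primitive_bezout[of "a i" "b i"] prim that unfolding slack_def A_def c_def by blast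
  have "A i \<noteq> 0 \<or> c i \<noteq> 0" if "i \<in> {..<m}" for i
    using unit[OF that] by (auto simp: slack_def)
  then obtain x1 where x1: "\<forall>i\<in>{..<m}. c i < A i \<bullet> x1"
    using exists_strict_point_full_dim_polyhedron[OF P full_dim] by blast
  have facet: "\<exists>y. (\<forall>i\<in>{..<m} - {k}. c i \<le> A i \<bullet> y) \<and> A k \<bullet> y < c k" if "k \<in> {..<m}" for k
    using irredundant_facet_witness[OF irred, of k] that unfolding A_def c_def by auto
  have "polyh m a b \<noteq> {}" using full_dim by auto
  then have "(\<lambda>p. p + (w, 0)) ` coneP (polyh m a b) \<inter> lattice_pts = shifted_cone_lattice {..<m} A c w"
    for w using lattice_points_shifted_coneP[OF P bounded _ intA intc] by blast
  then show ?thesis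
    using shifted_cone_lattice_eq_iff[OF finite_lessThan intA intc x1 facet unit]
    unfolding A_def by (simp add: Ball_def)
qed

end
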